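(* In the model of the context with $p=1$ (and any $q\in[0,1]$) and $L\ge2$, let $\mathtt{P}^\ast\in(0,1)$ be a desired $L$-localizability probability. If $\mathtt{P_L}\ge\mathtt{P}^\ast$, then the processing gain satisfies $$\gamma\ge\beta\left(\left(1-(\mathtt{P}^\ast)^{\frac{1}{L-1}}\right)^{-\alpha/2}+L-2\right).$$
   Context: Model: Let $\Phi$ be a homogeneous Poisson point process on $\mathbb{R}^2$ of intensity $\lambda>0$ (base stations); the user is at the origin. Label the points in increasing distance as $x_1,x_2,\dots$. Fix an integer $L$, $\alpha>2$, $P>0$, $\sigma^2\ge0$, $\gamma>0$, $\beta>0$, $p,q\in[0,1]$. Independently of $\Phi$ and each other let $a_1,\dots,a_L$ be Bernoulli($p$) and $b_{L+1},b_{L+2},\dots$ be Bernoulli($q$). For $k\le L$, $$\mathsf{SINR}_k(L)=\frac{P\|x_k\|^{-\alpha}}{\sum_{i=1,i\ne k}^{L}a_iP\|x_i\|^{-\alpha}+\sum_{j=L+1}^\infty b_jP\|x_j\|^{-\alpha}+\sigma^2},$$ and $\mathtt{P_L}=\mathbb{E}\left[\prod_{k=1}^L\mathbb{1}(\mathsf{SINR}_k(L)\ge\beta/\gamma)\right]$. *)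

theory Defs
  imports "HOL-Probability.Probability"
begin

definition pcount :: "(real^2) set \<Rightarrow> (real^2) set \<Rightarrow> nat" where
  "pcount S B = card (S \<inter> B)"

definition PPP :: "'w measure \<Rightarrow> ('w \<Rightarrow> (real^2) set) \<Rightarrow> real \<Rightarrow> bool" where
  "PPP M Phi lam \<longleftrightarrow>
     (\<forall>B. B \<in> sets borel \<and> bounded B \<longrightarrow>
        (\<forall>\<omega>\<in>space M. finite (Phi \<omega> \<inter> B)) \<and>
        (\<forall>n::nat. {\<omega>\<in>space M. pcount (Phi \<omega>) B = n} \<in> sets M \<and>
           measure M {\<omega>\<in>space M. pcount (Phi \<omega>) B = n}
             = (lam * measure lborel B) ^ n / fact n * exp (- lam * measure lborel B))) \<and>
     (\<forall>(I::nat set) Bs. finite I \<longrightarrow> disjoint_family_on Bs I \<longrightarrow>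
        (\<forall>i\<in>I. Bs i \<in> sets borel \<and> bounded (Bs i)) \<longrightarrow>
        prob_space.indep_vars M (\<lambda>_. count_space UNIV) (\<lambda>i \<omega>. pcount (Phi \<omega>) (Bs i)) I)"

definition phi_sigma :: "'w measure \<Rightarrow> ('w \<Rightarrow> (real^2) set) \<Rightarrow> 'w set set" where
  "phi_sigma M Phi = sigma_sets (space M)
     {{\<omega>\<in>space M. pcount (Phi \<omega>) B = n} | B n. B \<in> sets borel \<and> bounded B}"

definition ordered_labelling :: "(real^2) set \<Rightarrow> (nat \<Rightarrow> real^2) \<Rightarrow> bool" where
  "ordered_labelling S xs \<longleftrightarrow> inj_on xs {1..} \<and> S = xs ` {1..} \<and>
     (\<forall>i j. 1 \<le> i \<longrightarrow> i \<le> j \<longrightarrow> norm (xs i) \<le> norm (xs j))"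

definition sinr :: "real \<Rightarrow> real \<Rightarrow> real \<Rightarrow> nat \<Rightarrow> (nat \<Rightarrow> real^2) \<Rightarrow> (nat \<Rightarrow> bool)
    \<Rightarrow> (nat \<Rightarrow> bool) \<Rightarrow> nat \<Rightarrow> real" where
  "sinr P \<alpha> \<sigma>2 L xs as bs k =
     P * norm (xs k) powr (-\<alpha>) /
     ((\<Sum>i\<in>{1..L} - {k}. of_bool (as i) * P * norm (xs i) powr (-\<alpha>))
      + (\<Sum>j. of_bool (bs (j + L + 1)) * P * norm (xs (j + L + 1)) powr (-\<alpha>))
      + \<sigma>2)"

definition PL :: "'w measure \<Rightarrow> (nat \<Rightarrow> 'w \<Rightarrow> real^2) \<Rightarrow> (nat \<Rightarrow> 'w \<Rightarrow> bool) \<Rightarrow> (nat \<Rightarrow> 'w \<Rightarrow> bool)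
    \<Rightarrow> real \<Rightarrow> real \<Rightarrow> real \<Rightarrow> real \<Rightarrow> real \<Rightarrow> nat \<Rightarrow> real" where
  "PL M x a b P \<alpha> \<sigma>2 \<gamma> \<beta> L =
     prob_space.expectation M (\<lambda>\<omega>. \<Prod>k\<in>{1..L}.
        of_bool (sinr P \<alpha> \<sigma>2 L (\<lambda>i. x i \<omega>) (\<lambda>i. a i \<omega>) (\<lambda>j. b j \<omega>) k \<ge> \<beta> / \<gamma>))"

end

theory Submission
  imports Defs "HOL-Real_Asymp.Real_Asymp"
begin

text \<open>With all \<open>a i\<close> true, the event \<open>SINR_L \<ge> \<beta>/\<gamma>\<close> forces the nearest interferer \<open>x 1\<close> to be
  comparatively far away: for \<open>c = \<gamma>/\<beta> - (L - 2)\<close> it implies \<open>c > 0\<close> and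
  \<open>c powr (-2/\<alpha>) * |x L|^2 \<le> |x 1|^2\<close>. For a Poisson process the \<open>L - 1\<close> points inside the disc
  through \<open>x L\<close> are uniform, so \<open>P(s * |x L|^2 \<le> |x 1|^2) \<le> (1 - s) ^ (L - 1)\<close>; this is proved by
  discretising the area \<open>lam * pi * |x L|^2\<close> into steps \<open>h\<close> and letting \<open>h \<rightarrow> 0\<close>.
  Hence \<open>P* \<le> P_L \<le> (1 - c powr (-2/\<alpha>)) ^ (L - 1)\<close>, which rearranges to the bound.
  The interference series converges almost surely by Borel-Cantelli applied to the counts in
  the discs of radius \<open>2 ^ k\<close>.\<close>

section \<open>Poisson weights and discs of given mean\<close>

definition pois :: "real \<Rightarrow> nat \<Rightarrow> real" where
  "pois \<mu> k = \<mu> ^ k / fact k * exp (- \<mu>)"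

lemma pois_nonneg: "\<mu> \<ge> 0 \<Longrightarrow> pois \<mu> k \<ge> 0"
  unfolding pois_def by simp

lemma pois_mean_sums: "(\<lambda>k. real k * pois \<mu> k) sums \<mu>"
proof -
  have "real (Suc k) * pois \<mu> (Suc k) = \<mu> * exp (- \<mu>) * (\<mu> ^ k / fact k)" for k
  proof -
    have "(fact (Suc k) :: real) = real (Suc k) * fact k" by simp
    then show ?thesis
      unfolding pois_def by (simp del: of_nat_Suc fact_Suc)
  qed
  moreover have "(\<lambda>k. \<mu> * exp (- \<mu>) * (\<mu> ^ k / fact k)) sums (\<mu> * exp (- \<mu>) * exp \<mu>)"
    using exp_converges[of \<mu>] by (intro sums_mult) (simp add: divide_inverse mult.commute)
  moreover have "\<mu> * exp (- \<mu>) * exp \<mu> = \<mu>"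
    by (simp add: exp_minus_inverse mult.assoc mult.commute[of "exp (- \<mu>)"])
  ultimately have "(\<lambda>k. real (Suc k) * pois \<mu> (Suc k)) sums \<mu>"
    by simp
  then show ?thesis
    using sums_Suc_iff[of "\<lambda>k. real k * pois \<mu> k" \<mu>] by simp
qed

lemma pois_split: "pois (s * u) 0 * pois (u - s * u) n = (1 - s) ^ n * pois u n"
proof -
  have "u - s * u = (1 - s) * u" by (simp add: algebra_simps)
  moreover have "exp (- (s * u)) * exp (- ((1 - s) * u)) = exp (- u)"
    by (simp add: exp_add[symmetric] algebra_simps)
  ultimately show ?thesis
    unfolding pois_def by (simp add: power_mult_distrib)
qed

text \<open>The centred disc containing on average \<open>u\<close> points of a process of intensity \<open>lam\<close>.\<close>

definition mean_ball :: "real \<Rightarrow> real \<Rightarrow> (real^2) set" where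
  "mean_ball lam u = ball 0 (sqrt (u / (lam * pi)))"

lemma mem_mean_ball:
  assumes "lam > 0"
  shows "y \<in> mean_ball lam u \<longleftrightarrow> lam * pi * norm y ^ 2 < u"
proof -
  have "norm y < sqrt (u / (lam * pi)) \<longleftrightarrow> sqrt (norm y ^ 2) < sqrt (u / (lam * pi))"
    by simp
  also have "\<dots> \<longleftrightarrow> norm y ^ 2 < u / (lam * pi)"
    by (rule real_sqrt_less_iff)
  also have "\<dots> \<longleftrightarrow> lam * pi * norm y ^ 2 < u"
    using assms by (simp add: pos_less_divide_eq mult.commute)
  finally show ?thesis
    unfolding mean_ball_def by (simp add: dist_norm)
qed

lemma mean_ball_mono: "lam > 0 \<Longrightarrow> u \<le> v \<Longrightarrow> mean_ball lam u \<subseteq> mean_ball lam v"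
  by (auto simp: mem_mean_ball)

lemma mean_ball_borel_bounded: "mean_ball lam u \<in> sets borel" "bounded (mean_ball lam u)"
  unfolding mean_ball_def by auto

lemma measure_mean_ball:
  assumes "lam > 0" "u \<ge> 0"
  shows "lam * measure lborel (mean_ball lam u) = u"
  using assms circle_area[of "sqrt (u / (lam * pi))" "0::real^2"] by (simp add: mean_ball_def)

lemma measure_mean_ball_diff:
  assumes "lam > 0" "0 \<le> u" "u \<le> v"
  shows "lam * measure lborel (mean_ball lam v - mean_ball lam u) = v - u"
proof -
  have "measure lborel (mean_ball lam v - mean_ball lam u)
      = measure lborel (mean_ball lam v) - measure lborel (mean_ball lam u)"
    using assms mean_ball_mono[of lam u v] emeasure_lborel_ball_finite[of "0::real^2" "sqrt (v / (lam * pi))"]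
    by (intro measure_Diff) (auto simp: mean_ball_def)
  then show ?thesis
    using assms measure_mean_ball[of lam u] measure_mean_ball[of lam v] by (simp add: right_diff_distrib)
qed

section \<open>Ordered point configurations\<close>

lemma card_Int_split:
  assumes "A \<subseteq> C" "finite (S \<inter> C)"
  shows "card (S \<inter> C) = card (S \<inter> A) + card (S \<inter> (C - A))"
proof -
  have "S \<inter> C = (S \<inter> A) \<union> (S \<inter> (C - A))" "(S \<inter> A) \<inter> (S \<inter> (C - A)) = {}"
    using assms(1) by auto
  moreover have "finite (S \<inter> A)" "finite (S \<inter> (C - A))"
    using assms by (blast intro: finite_subset[OF _ assms(2)])+
  ultimately show ?thesis
    by (metis card_Un_disjoint)
qed

lemma ordered_labelling_card_le:
  assumes ol: "ordered_labelling S xs" and "L \<ge> 1" and T: "\<And>y. y \<in> T \<Longrightarrow> norm y < norm (xs L)"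
  shows "card (S \<inter> T) \<le> L - 1"
proof -
  have "S \<inter> T \<subseteq> xs ` {1..<L}"
  proof
    fix y assume y: "y \<in> S \<inter> T"
    then obtain j where j: "1 \<le> j" "y = xs j"
      using ol unfolding ordered_labelling_def by auto
    have "j < L"
    proof (rule ccontr)
      assume "\<not> j < L"
      then have "norm (xs L) \<le> norm y"
        using ol \<open>L \<ge> 1\<close> j unfolding ordered_labelling_def by auto
      with y T show False by fastforce
    qed
    with j show "y \<in> xs ` {1..<L}" by auto
  qed
  then have "card (S \<inter> T) \<le> card (xs ` {1..<L})"
    by (intro card_mono) auto
  also have "\<dots> \<le> L - 1"
    using card_image_le[of "{1..<L}" xs] by simp
  finally show ?thesis .
qed

lemma ordered_labelling_card_ge:
  assumes ol: "ordered_labelling S xs" and "finite (S \<inter> T)"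
    and T: "\<And>y. norm y \<le> norm (xs L) \<Longrightarrow> y \<in> T"
  shows "L \<le> card (S \<inter> T)"
proof -
  have "inj_on xs {1..L}"
    using ol unfolding ordered_labelling_def by (auto intro: inj_on_subset)
  have "xs ` {1..L} \<subseteq> S \<inter> T"
    using ol T unfolding ordered_labelling_def by (auto simp: image_subset_iff)
  then have "card (xs ` {1..L}) \<le> card (S \<inter> T)"
    by (rule card_mono[OF \<open>finite (S \<inter> T)\<close>])
  with \<open>inj_on xs {1..L}\<close> show ?thesis
    by (simp add: card_image)
qed

lemma ordered_labelling_crossing:
  assumes ol: "ordered_labelling S xs" and "L \<ge> 1" and fin: "\<And>u. finite (S \<inter> mean_ball lam u)"
    and "lam > 0" "h > 0" "0 \<le> s" and ratio: "s * norm (xs L) ^ 2 \<le> norm (xs 1) ^ 2"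
  shows "\<exists>m. pcount S (mean_ball lam (s * (real m * h))) = 0
    \<and> pcount S (mean_ball lam (real m * h)) \<le> L - 1
    \<and> L \<le> pcount S (mean_ball lam (real (Suc m) * h))"
proof -
  define U where "U = lam * pi * norm (xs L) ^ 2"
  define m where "m = nat \<lfloor>U / h\<rfloor>"
  have "U \<ge> 0"
    using \<open>lam > 0\<close> unfolding U_def by simp
  then have "real m \<le> U / h" "U / h < real m + 1"
    unfolding m_def using \<open>h > 0\<close> by (auto simp: of_nat_nat)
  then have m: "real m * h \<le> U" "U < real (Suc m) * h"
    using \<open>h > 0\<close> by (auto simp: field_simps)
  have lam_pi: "lam * pi > 0"
    using \<open>lam > 0\<close> by simp
  have "pcount S (mean_ball lam (s * (real m * h))) \<le> 1 - 1"
    unfolding pcount_def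
  proof (rule ordered_labelling_card_le[OF ol order_refl])
    fix y assume "y \<in> mean_ball lam (s * (real m * h))"
    then have "lam * pi * norm y ^ 2 < s * (real m * h)"
      using \<open>lam > 0\<close> by (simp add: mem_mean_ball)
    also have "\<dots> \<le> s * U"
      using m \<open>0 \<le> s\<close> by (simp add: mult_left_mono)
    also have "\<dots> \<le> lam * pi * norm (xs 1) ^ 2"
      using ratio lam_pi unfolding U_def by (simp add: mult.left_commute[of s] mult_left_mono)
    finally show "norm y < norm (xs 1)"
      using lam_pi by (metis mult_less_cancel_left_pos norm_ge_zero power2_less_imp_less)
  qed
  moreover have "pcount S (mean_ball lam (real m * h)) \<le> L - 1"
    unfolding pcount_def
  proof (rule ordered_labelling_card_le[OF ol \<open>L \<ge> 1\<close>])
    fix y assume "y \<in> mean_ball lam (real m * h)"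
    then have "lam * pi * norm y ^ 2 < real m * h"
      using \<open>lam > 0\<close> by (simp add: mem_mean_ball)
    then have "lam * pi * norm y ^ 2 < lam * pi * norm (xs L) ^ 2"
      using m unfolding U_def by linarith
    then show "norm y < norm (xs L)"
      using lam_pi by (metis mult_less_cancel_left_pos norm_ge_zero power2_less_imp_less)
  qed
  moreover have "L \<le> pcount S (mean_ball lam (real (Suc m) * h))"
    unfolding pcount_def
  proof (rule ordered_labelling_card_ge[OF ol fin])
    fix y :: "real^2" assume "norm y \<le> norm (xs L)"
    then have "lam * pi * norm y ^ 2 \<le> U"
      using lam_pi unfolding U_def by (intro mult_left_mono power_mono) auto
    then show "y \<in> mean_ball lam (real (Suc m) * h)"
      using \<open>lam > 0\<close> m by (simp add: mem_mean_ball)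
  qed
  ultimately show ?thesis
    by auto
qed

lemma summable_norm_powr_of_counts:
  fixes xs :: "nat \<Rightarrow> real^2"
  assumes ol: "ordered_labelling S xs" and "b > 0" "\<alpha> > b"
    and fin: "\<And>r. finite (S \<inter> ball 0 r)"
    and counts: "\<And>k. k \<ge> K \<Longrightarrow> real (card (S \<inter> ball 0 (2 ^ k))) < (2 powr b) ^ k"
  shows "summable (\<lambda>j. norm (xs j) powr (- \<alpha>))"
proof -
  define c where "c = 2 powr b"
  have "c > 1"
    unfolding c_def using \<open>b > 0\<close> by simp
  have far: "2 ^ k \<le> norm (xs j)" if "k \<ge> K" "c ^ k \<le> real j" for j k
  proof (rule ccontr)
    assume "\<not> 2 ^ k \<le> norm (xs j)"
    then have "j \<le> card (S \<inter> ball 0 (2 ^ k))"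
      by (intro ordered_labelling_card_ge[OF ol fin]) auto
    with counts[OF \<open>k \<ge> K\<close>] \<open>c ^ k \<le> real j\<close> show False
      unfolding c_def by linarith
  qed
  have bound: "norm (norm (xs j) powr (- \<alpha>)) \<le> 2 powr \<alpha> * real j powr (- (\<alpha> / b))"
    if "c ^ K \<le> real j" for j
  proof -
    have "real j > 0"
      using that one_le_power[of c K] \<open>c > 1\<close> by linarith
    define k where "k = nat \<lfloor>log c j\<rfloor>"
    have "K \<le> log c j"
      using that \<open>c > 1\<close> \<open>real j > 0\<close> by (simp add: le_log_iff powr_realpow)
    then have "K \<le> k" "real k \<le> log c j" "log c j < real k + 1"
      unfolding k_def by linarith+
    moreover have "c powr (real k + 1) = c ^ (k + 1)"
      using powr_realpow[of c "k + 1"] \<open>c > 1\<close> by (simp add: add.commute)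
    ultimately have "c ^ k \<le> real j" "real j < c ^ (k + 1)"
      using \<open>c > 1\<close> \<open>real j > 0\<close> by (simp_all add: le_log_iff log_less_iff powr_realpow)
    have "real j powr (1 / b) < (c ^ (k + 1)) powr (1 / b)"
      using \<open>real j < c ^ (k + 1)\<close> \<open>real j > 0\<close> \<open>b > 0\<close> by (simp add: powr_less_mono2)
    also have "\<dots> = (c powr real (k + 1)) powr (1 / b)"
      using powr_realpow[of c "k + 1"] \<open>c > 1\<close> by simp
    also have "\<dots> = 2 powr (b * real (k + 1) * (1 / b))"
      unfolding c_def by (simp only: powr_powr)
    also have "\<dots> = 2 * 2 ^ k"
      using \<open>b > 0\<close> by (simp add: powr_add powr_realpow)
    finally have "real j powr (1 / b) / 2 \<le> norm (xs j)"
      using far[OF \<open>K \<le> k\<close> \<open>c ^ k \<le> real j\<close>] by simp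
    then have "norm (xs j) powr (- \<alpha>) \<le> (real j powr (1 / b) / 2) powr (- \<alpha>)"
      using \<open>real j > 0\<close> \<open>\<alpha> > b\<close> \<open>b > 0\<close> by (intro powr_mono2') auto
    also have "\<dots> = 2 powr \<alpha> * real j powr (- (\<alpha> / b))"
      using \<open>b > 0\<close> by (simp add: powr_divide powr_powr powr_minus_divide divide_simps)
    finally show ?thesis
      by simp
  qed
  have "summable (\<lambda>j. 2 powr \<alpha> * real j powr (- (\<alpha> / b)))"
    using \<open>\<alpha> > b\<close> \<open>b > 0\<close> by (intro summable_mult) (simp add: summable_real_powr_iff field_simps)
  then show ?thesis
    by (rule summable_comparison_test'[of _ "nat \<lceil>c ^ K\<rceil>"]) (use bound in \<open>auto simp: ceiling_le_iff\<close>)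
qed

section \<open>The SINR threshold\<close>

lemma sinr_last_le:
  fixes xs :: "nat \<Rightarrow> real^2"
  assumes ol: "ordered_labelling S xs" and "0 \<notin> S" and "L \<ge> 2"
    and as: "\<forall>i\<in>{1..L}. as i" and summable: "summable (\<lambda>j. norm (xs j) powr (- \<alpha>))"
    and "\<alpha> > 0" "P > 0" "\<sigma>2 \<ge> 0"
  shows "sinr P \<alpha> \<sigma>2 L xs as bs L
    \<le> norm (xs L) powr (- \<alpha>) / (norm (xs 1) powr (- \<alpha>) + (real L - 2) * norm (xs L) powr (- \<alpha>))"
proof -
  define t where "t i = norm (xs i) powr (- \<alpha>)" for i
  have t_pos: "t i > 0" if "i \<ge> 1" for i
    using ol \<open>0 \<notin> S\<close> that unfolding t_def ordered_labelling_def by auto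
  have t_mono: "t L \<le> t i" if "1 \<le> i" "i \<le> L" for i
    using ol that t_pos[OF that(1)] \<open>\<alpha> > 0\<close> unfolding t_def ordered_labelling_def
    by (intro powr_mono2') auto
  \<comment> \<open>Summability is needed because \<open>suminf\<close> of a divergent series is unspecified.\<close>
  define I where "I = (\<Sum>j. of_bool (bs (j + L + 1)) * P * norm (xs (j + L + 1)) powr (- \<alpha>))"
  have "summable (\<lambda>j. P * norm (xs (j + (L + 1))) powr (- \<alpha>))"
    using summable_mult[OF summable_ignore_initial_segment[OF summable, of "L + 1"], of P] by simp
  then have "summable (\<lambda>j. of_bool (bs (j + L + 1)) * P * norm (xs (j + L + 1)) powr (- \<alpha>))"
    by (rule summable_comparison_test'[where N = 0]) (use \<open>P > 0\<close> in \<open>auto simp: add.assoc\<close>)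
  then have "I \<ge> 0"
    unfolding I_def by (rule suminf_nonneg) (use \<open>P > 0\<close> in auto)
  have split: "(\<Sum>i\<in>{1..L} - {L}. t i) = t 1 + (\<Sum>i\<in>{2..<L}. t i)"
  proof -
    have "{1..L} - {L} = insert 1 {2..<L}"
      using \<open>L \<ge> 2\<close> by auto
    then show ?thesis
      by simp
  qed
  have "(\<Sum>i\<in>{2..<L}. t i) \<ge> (real L - 2) * t L"
    using sum_mono[of "{2..<L}" "\<lambda>_. t L" t] t_mono \<open>L \<ge> 2\<close> by (simp add: of_nat_diff)
  with split have interference: "(\<Sum>i\<in>{1..L} - {L}. t i) \<ge> t 1 + (real L - 2) * t L"
    by linarith
  have "(real L - 2) * t L \<ge> 0"
    using \<open>L \<ge> 2\<close> t_pos[of L] by (intro mult_nonneg_nonneg) auto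
  then have den_pos: "P * (t 1 + (real L - 2) * t L) > 0"
    using t_pos[of 1] \<open>P > 0\<close> by simp
  have "P * (t 1 + (real L - 2) * t L) \<le> P * (\<Sum>i\<in>{1..L} - {L}. t i)"
    using interference \<open>P > 0\<close> by (intro mult_left_mono) auto
  then have den_le: "P * (t 1 + (real L - 2) * t L) \<le> P * (\<Sum>i\<in>{1..L} - {L}. t i) + I + \<sigma>2"
    using \<open>I \<ge> 0\<close> \<open>\<sigma>2 \<ge> 0\<close> by linarith
  have "sinr P \<alpha> \<sigma>2 L xs as bs L = P * t L / (P * (\<Sum>i\<in>{1..L} - {L}. t i) + I + \<sigma>2)"
    unfolding sinr_def I_def t_def using as by (simp add: sum_distrib_left)
  also have "\<dots> \<le> P * t L / (P * (t 1 + (real L - 2) * t L))"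
    using den_pos den_le t_pos[of L] \<open>P > 0\<close> \<open>L \<ge> 2\<close> by (intro frac_le) auto
  also have "\<dots> = t L / (t 1 + (real L - 2) * t L)"
    using \<open>P > 0\<close> by simp
  finally show ?thesis
    unfolding t_def .
qed

lemma sinr_threshold_imp_norm_ratio:
  fixes r1 rL \<alpha> \<beta> \<gamma> k :: real
  assumes "0 < r1" "0 < rL" "\<alpha> > 0" "\<beta> > 0" "\<gamma> > 0" "k \<ge> 0"
    and threshold: "\<beta> / \<gamma> \<le> rL powr (- \<alpha>) / (r1 powr (- \<alpha>) + k * rL powr (- \<alpha>))"
  shows "\<gamma> / \<beta> - k > 0 \<and> (\<gamma> / \<beta> - k) powr (- 2 / \<alpha>) * rL ^ 2 \<le> r1 ^ 2"
proof -
  define c where "c = \<gamma> / \<beta> - k"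
  have t_pos: "r1 powr (- \<alpha>) > 0" "rL powr (- \<alpha>) > 0"
    using assms by auto
  then have "\<beta> * (r1 powr (- \<alpha>) + k * rL powr (- \<alpha>)) \<le> \<gamma> * rL powr (- \<alpha>)"
    using threshold \<open>\<beta> > 0\<close> \<open>\<gamma> > 0\<close> \<open>k \<ge> 0\<close>
    by (simp add: divide_le_eq le_divide_eq add_pos_nonneg mult.commute mult.left_commute)
  then have le: "r1 powr (- \<alpha>) \<le> c * rL powr (- \<alpha>)"
    unfolding c_def using \<open>\<beta> > 0\<close> by (simp add: field_simps)
  then have "c * rL powr (- \<alpha>) > 0"
    using t_pos by linarith
  then have "c > 0"
    using t_pos(2) by (rule zero_less_mult_pos2)
  have square: "(y powr (- \<alpha>)) powr (- 2 / \<alpha>) = y ^ 2" if "y > 0" for y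
    using that \<open>\<alpha> > 0\<close> by (simp add: powr_powr powr_numeral)
  have "c powr (- 2 / \<alpha>) * rL ^ 2 = (c * rL powr (- \<alpha>)) powr (- 2 / \<alpha>)"
    using \<open>c > 0\<close> square[OF \<open>rL > 0\<close>] by (simp add: powr_mult)
  also have "\<dots> \<le> (r1 powr (- \<alpha>)) powr (- 2 / \<alpha>)"
    using le t_pos \<open>\<alpha> > 0\<close> by (intro powr_mono2') auto
  also have "\<dots> = r1 ^ 2"
    using square[OF \<open>r1 > 0\<close>] .
  finally show ?thesis
    using \<open>c > 0\<close> unfolding c_def by simp
qed

lemma le_one_minus_powr_of_le_power:
  assumes "n > 0" "0 < p" "p \<le> (1 - s) ^ n" "s \<le> 1"
  shows "s \<le> 1 - p powr (1 / real n)"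
proof -
  have "1 - s > 0"
    using assms by (cases "s = 1") (auto simp: zero_power)
  have "p powr (1 / real n) \<le> ((1 - s) ^ n) powr (1 / real n)"
    using assms by (intro powr_mono2) auto
  also have "\<dots> = 1 - s"
    using \<open>1 - s > 0\<close> \<open>n > 0\<close> by (simp add: powr_realpow[symmetric] powr_powr)
  finally show ?thesis
    by simp
qed

lemma powr_antitone_inverse_le:
  fixes c s \<alpha> :: real
  assumes "0 < c" "\<alpha> > 0" "c powr (- 2 / \<alpha>) \<le> s"
  shows "s powr (- \<alpha> / 2) \<le> c"
proof -
  have "s powr (- \<alpha> / 2) \<le> (c powr (- 2 / \<alpha>)) powr (- \<alpha> / 2)"
    using assms by (intro powr_mono2') auto
  also have "\<dots> = c"
    using assms by (simp add: powr_powr)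
  finally show ?thesis .
qed

section \<open>Poisson point processes\<close>

lemma (in prob_space) prob_UN_le_disjoint_plus_geometric:
  fixes G D :: "nat \<Rightarrow> 'a set"
  assumes events: "range G \<subseteq> events" "range D \<subseteq> events" and "disjoint_family D"
    and bound: "\<And>m. prob (G m) \<le> c * prob (D m) + q ^ m * g"
    and "0 \<le> c" "c \<le> 1" "0 \<le> q" "q < 1"
  shows "prob (\<Union>m. G m) \<le> c + g / (1 - q)"
proof -
  have "(\<lambda>m. prob (D m)) sums prob (\<Union>m. D m)"
    using assms by (intro finite_measure_UNION) auto
  moreover have "(\<lambda>m. q ^ m * g) sums (g / (1 - q))"
    using sums_mult2[OF geometric_sums[of q], of g] assms by (simp add: divide_inverse mult.commute)
  ultimately have sums: "(\<lambda>m. c * prob (D m) + q ^ m * g) sums (c * prob (\<Union>m. D m) + g / (1 - q))"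
    by (intro sums_add sums_mult)
  have summable: "summable (\<lambda>m. prob (G m))"
    by (rule summable_comparison_test'[OF sums_summable[OF sums], of 0]) (use bound in auto)
  have "prob (\<Union>m. G m) \<le> (\<Sum>m. prob (G m))"
    using events summable by (intro finite_measure_subadditive_countably) auto
  also have "\<dots> \<le> c * prob (\<Union>m. D m) + g / (1 - q)"
    using sums_le[OF _ summable_sums[OF summable] sums] bound by auto
  also have "\<dots> \<le> c + g / (1 - q)"
    using \<open>0 \<le> c\<close> \<open>c \<le> 1\<close> by (simp add: mult_left_le)
  finally show ?thesis .
qed

lemma (in prob_space) integral_le_prob_of_AE_le_indicator:
  assumes "AE \<omega> in M. f \<omega> \<le> indicator E \<omega>" "E \<in> events"
  shows "integral\<^sup>L M f \<le> prob E"
proof (cases "integrable M f")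
  case True
  then have "integral\<^sup>L M f \<le> integral\<^sup>L M (indicator E)"
    using assms by (intro integral_mono_AE) (auto simp: emeasure_eq_measure)
  then show ?thesis
    using \<open>E \<in> events\<close> by simp
qed (simp add: not_integrable_integral_eq)

locale ppp = prob_space M for M :: "'w measure" +
  fixes Phi :: "'w \<Rightarrow> (real^2) set" and lam :: real
  assumes PPP: "PPP M Phi lam" and lam_pos: "lam > 0"
begin

abbreviation count_in :: "(real^2) set \<Rightarrow> nat set \<Rightarrow> 'w set" where
  "count_in B S \<equiv> {\<omega>\<in>space M. pcount (Phi \<omega>) B \<in> S}"

lemma finite_Phi_Int:
  "\<omega> \<in> space M \<Longrightarrow> B \<in> sets borel \<Longrightarrow> bounded B \<Longrightarrow> finite (Phi \<omega> \<inter> B)"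
  using PPP unfolding PPP_def by auto

lemma count_in_event:
  assumes "B \<in> sets borel" "bounded B"
  shows "count_in B S \<in> events"
proof -
  have "count_in B S = (\<Union>n\<in>S. {\<omega>\<in>space M. pcount (Phi \<omega>) B = n})"
    by auto
  also have "\<dots> \<in> events"
    using PPP assms unfolding PPP_def by (intro sets.countable_UN') auto
  finally show ?thesis .
qed

lemma prob_count_eq:
  assumes "B \<in> sets borel" "bounded B"
  shows "prob (count_in B {k}) = pois (lam * measure lborel B) k"
  using PPP assms unfolding PPP_def pois_def by simp

lemma prob_count_ge_2:
  assumes "B \<in> sets borel" "bounded B"
  shows "prob (count_in B {2..})
    = 1 - exp (- (lam * measure lborel B)) - lam * measure lborel B * exp (- (lam * measure lborel B))"
proof -
  have "count_in B {2..} = space M - (count_in B {0} \<union> count_in B {1})"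
    by auto
  moreover have "count_in B {0} \<union> count_in B {1} \<in> events"
    using assms by (intro sets.Un count_in_event)
  moreover have "prob (count_in B {0} \<union> count_in B {1}) = prob (count_in B {0}) + prob (count_in B {1})"
    using assms by (intro finite_measure_Union count_in_event) auto
  ultimately show ?thesis
    using prob_compl[of "count_in B {0} \<union> count_in B {1}"]
      prob_count_eq[OF assms, of 0] prob_count_eq[OF assms, of 1]
    by (simp add: pois_def)
qed

lemma prob_count_ge_le:
  assumes "B \<in> sets borel" "bounded B" "t > 0"
  shows "prob (count_in B {t..}) \<le> lam * measure lborel B / real t"
proof -
  define \<mu> where "\<mu> = lam * measure lborel B"
  have "\<mu> \<ge> 0"
    unfolding \<mu>_def using lam_pos by simp
  have "count_in B {k + t} \<in> events" for k
    using assms by (intro count_in_event)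
  then have "(\<lambda>k. prob (count_in B {k + t})) sums prob (\<Union>k. count_in B {k + t})"
    by (intro finite_measure_UNION) (auto simp: disjoint_family_on_def)
  moreover have "(\<Union>k. count_in B {k + t}) = count_in B {t..}"
    by (auto intro: le_add_diff_inverse2[symmetric])
  ultimately have tail: "(\<lambda>k. pois \<mu> (k + t)) sums prob (count_in B {t..})"
    using prob_count_eq[OF assms(1,2)] unfolding \<mu>_def by simp
  have "(\<lambda>k. real (k + t) * pois \<mu> (k + t)) sums (\<mu> - (\<Sum>i<t. real i * pois \<mu> i))"
    using sums_split_initial_segment[OF pois_mean_sums[of \<mu>], of t] by simp
  then have "real t * prob (count_in B {t..}) \<le> \<mu> - (\<Sum>i<t. real i * pois \<mu> i)"
    using \<open>\<mu> \<ge> 0\<close> by (intro sums_le[OF _ sums_mult[OF tail]]) (auto intro: mult_right_mono pois_nonneg)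
  also have "\<dots> \<le> \<mu>"
    using pois_nonneg[OF \<open>\<mu> \<ge> 0\<close>] by (simp add: sum_nonneg)
  finally show ?thesis
    using \<open>t > 0\<close> unfolding \<mu>_def by (simp add: field_simps)
qed

lemma pcount_split:
  assumes "\<omega> \<in> space M" "A \<subseteq> B" "B \<in> sets borel" "bounded B"
  shows "pcount (Phi \<omega>) B = pcount (Phi \<omega>) A + pcount (Phi \<omega>) (B - A)"
  unfolding pcount_def using assms by (intro card_Int_split finite_Phi_Int)

lemma prob_count_in_indep:
  assumes "finite (I :: nat set)" "I \<noteq> {}" "disjoint_family_on Bs I" "\<And>i. i \<in> I \<Longrightarrow> Bs i \<in> sets borel \<and> bounded (Bs i)"
  shows "prob {\<omega>\<in>space M. \<forall>i\<in>I. pcount (Phi \<omega>) (Bs i) \<in> Ss i} = (\<Prod>i\<in>I. prob (count_in (Bs i) (Ss i)))"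
proof -
  have indep: "\<forall>(I::nat set) Bs. finite I \<longrightarrow> disjoint_family_on Bs I \<longrightarrow>
      (\<forall>i\<in>I. Bs i \<in> sets borel \<and> bounded (Bs i)) \<longrightarrow>
      indep_vars (\<lambda>_. count_space UNIV) (\<lambda>i \<omega>. pcount (Phi \<omega>) (Bs i)) I"
    using PPP unfolding PPP_def by (rule conjunct2)
  have "indep_vars (\<lambda>_. count_space UNIV) (\<lambda>i \<omega>. pcount (Phi \<omega>) (Bs i)) I"
    using assms by (intro indep[rule_format]) auto
  then have "prob (\<Inter>i\<in>I. (\<lambda>\<omega>. pcount (Phi \<omega>) (Bs i)) -` Ss i \<inter> space M)
      = (\<Prod>i\<in>I. prob ((\<lambda>\<omega>. pcount (Phi \<omega>) (Bs i)) -` Ss i \<inter> space M))"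
    using assms by (intro indep_varsD_finite) auto
  moreover have "(\<Inter>i\<in>I. (\<lambda>\<omega>. pcount (Phi \<omega>) (Bs i)) -` Ss i \<inter> space M)
      = {\<omega>\<in>space M. \<forall>i\<in>I. pcount (Phi \<omega>) (Bs i) \<in> Ss i}"
    using \<open>I \<noteq> {}\<close> by auto
  ultimately show ?thesis
    by (simp add: vimage_def Int_def conj_commute)
qed

lemma prob_count_in_Int:
  assumes "A \<inter> B = {}" "A \<in> sets borel" "bounded A" "B \<in> sets borel" "bounded B"
  shows "prob (count_in A S \<inter> count_in B T) = prob (count_in A S) * prob (count_in B T)"
proof -
  have "prob (count_in A S \<inter> count_in B T)
      = prob {\<omega>\<in>space M. \<forall>i\<in>{0, 1::nat}. pcount (Phi \<omega>) ([A, B] ! i) \<in> [S, T] ! i}"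
    by (rule arg_cong[where f = prob]) auto
  also have "\<dots> = prob (count_in A S) * prob (count_in B T)"
    using assms by (subst prob_count_in_indep) (auto simp: disjoint_family_on_def)
  finally show ?thesis .
qed

lemma prob_count_in_Int3:
  assumes "A \<inter> B = {}" "A \<inter> C = {}" "B \<inter> C = {}"
    and "A \<in> sets borel" "bounded A" "B \<in> sets borel" "bounded B" "C \<in> sets borel" "bounded C"
  shows "prob (count_in A R \<inter> count_in B S \<inter> count_in C T)
    = prob (count_in A R) * prob (count_in B S) * prob (count_in C T)"
proof -
  have "prob (count_in A R \<inter> count_in B S \<inter> count_in C T)
      = prob {\<omega>\<in>space M. \<forall>i\<in>{0, 1, 2::nat}. pcount (Phi \<omega>) ([A, B, C] ! i) \<in> [R, S, T] ! i}"
    by (rule arg_cong[where f = prob]) auto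
  also have "\<dots> = prob (count_in A R) * prob (count_in B S) * prob (count_in C T)"
    using assms by (subst prob_count_in_indep) (auto simp: disjoint_family_on_def mult.assoc)
  finally show ?thesis .
qed

text \<open>Given \<open>n\<close> points in \<open>B\<close>, they are independent and uniform, so all of them miss \<open>B1\<close> with
  probability \<open>(1 - s) ^ n\<close>; if \<open>B\<close> holds fewer than \<open>n\<close> points, then \<open>B' - B\<close> holds at least two.\<close>

lemma prob_hole_crossing_le:
  assumes sub: "B1 \<subseteq> B" "B \<subseteq> B'"
    and borel: "B1 \<in> sets borel" "bounded B1" "B \<in> sets borel" "bounded B" "B' \<in> sets borel" "bounded B'"
    and vol: "lam * measure lborel B1 = s * (lam * measure lborel B)" and "0 \<le> s" "s \<le> 1"
  shows "prob (count_in B1 {0} \<inter> count_in B {..n} \<inter> count_in B' {Suc n..})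
    \<le> (1 - s) ^ n * prob (count_in B {..n} \<inter> count_in B' {Suc n..})
      + exp (- (lam * measure lborel B1)) * prob (count_in (B' - B) {2..})"
proof -
  define C where "C = B' - B"
  define u where "u = lam * measure lborel B"
  have borel_C: "C \<in> sets borel" "bounded C" "B - B1 \<in> sets borel" "bounded (B - B1)"
    unfolding C_def using borel by (auto intro: bounded_subset)
  have "measure lborel (B - B1) = measure lborel B - measure lborel B1"
    using sub borel emeasure_bounded_finite[of B] by (intro measure_Diff) auto
  then have vol_rest: "lam * measure lborel (B - B1) = u - s * u"
    using vol unfolding u_def by (simp add: right_diff_distrib)
  have split: "pcount (Phi \<omega>) B' = pcount (Phi \<omega>) B + pcount (Phi \<omega>) C"
    "pcount (Phi \<omega>) B = pcount (Phi \<omega>) B1 + pcount (Phi \<omega>) (B - B1)" if "\<omega> \<in> space M" for \<omega>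
    unfolding C_def using that sub borel by (auto intro: pcount_split)
  define T1 where "T1 = count_in B1 {0} \<inter> count_in (B - B1) {n} \<inter> count_in C {1..}"
  define T2 where "T2 = count_in B1 {0} \<inter> count_in C {2..}"
  have events: "T1 \<in> events" "T2 \<in> events"
    unfolding T1_def T2_def using borel borel_C by (intro sets.Int count_in_event; simp)+
  have "count_in B1 {0} \<inter> count_in B {..n} \<inter> count_in B' {Suc n..} \<subseteq> T1 \<union> T2"
    unfolding T1_def T2_def using split by fastforce
  then have "prob (count_in B1 {0} \<inter> count_in B {..n} \<inter> count_in B' {Suc n..}) \<le> prob (T1 \<union> T2)"
    using events by (intro finite_measure_mono) auto
  also have "\<dots> \<le> prob T1 + prob T2"
    using events by (intro measure_Un_le) auto
  also have "prob T1 = (1 - s) ^ n * (pois u n * prob (count_in C {1..}))"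
  proof -
    have "prob (count_in B1 {0}) = pois (s * u) 0"
      using prob_count_eq[OF borel(1,2), of 0] unfolding vol u_def .
    moreover have "prob (count_in (B - B1) {n}) = pois (u - s * u) n"
      using prob_count_eq[OF borel_C(3,4), of n] unfolding vol_rest .
    moreover have "prob T1 = prob (count_in B1 {0}) * prob (count_in (B - B1) {n}) * prob (count_in C {1..})"
      unfolding T1_def using sub borel borel_C by (intro prob_count_in_Int3) (auto simp: C_def)
    ultimately have "prob T1 = pois (s * u) 0 * pois (u - s * u) n * prob (count_in C {1..})"
      by simp
    then show ?thesis
      by (simp add: pois_split)
  qed
  also have "pois u n * prob (count_in C {1..}) = prob (count_in B {n} \<inter> count_in C {1..})"
    using prob_count_in_Int[of B C "{n}" "{1..}"] prob_count_eq[OF borel(3,4), of n] borel borel_C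
    by (simp add: C_def u_def)
  also have "\<dots> \<le> prob (count_in B {..n} \<inter> count_in B' {Suc n..})"
    using borel split by (intro finite_measure_mono sets.Int count_in_event) auto
  also have "prob T2 = exp (- (lam * measure lborel B1)) * prob (count_in C {2..})"
    unfolding T2_def using prob_count_in_Int[of B1 C "{0}" "{2..}"] prob_count_eq[OF borel(1,2), of 0]
      sub borel borel_C by (auto simp: C_def pois_def)
  finally show ?thesis
    using \<open>s \<le> 1\<close> by (simp add: C_def mult_left_mono)
qed

lemma disjoint_family_count_crossings:
  assumes mono: "\<And>m. A m \<subseteq> A (Suc m)" and borel: "\<And>m. A m \<in> sets borel \<and> bounded (A m)"
  shows "disjoint_family (\<lambda>m. count_in (A m) {..n} \<inter> count_in (A (Suc m)) {Suc n..})"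
proof -
  define D where "D m = count_in (A m) {..n} \<inter> count_in (A (Suc m)) {Suc n..}" for m
  have count_mono: "pcount (Phi \<omega>) (A i) \<le> pcount (Phi \<omega>) (A j)" if "\<omega> \<in> space M" "i \<le> j" for \<omega> i j
  proof (rule lift_Suc_mono_le[of "\<lambda>m. pcount (Phi \<omega>) (A m)", OF _ that(2)])
    show "pcount (Phi \<omega>) (A m) \<le> pcount (Phi \<omega>) (A (Suc m))" for m
      using pcount_split[OF that(1) mono] borel by simp
  qed
  have disjoint: "D i \<inter> D j = {}" if "i < j" for i j
  proof (intro equals0I)
    fix \<omega> assume "\<omega> \<in> D i \<inter> D j"
    then have "\<omega> \<in> space M" "Suc n \<le> pcount (Phi \<omega>) (A (Suc i))" "pcount (Phi \<omega>) (A j) \<le> n"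
      unfolding D_def by auto
    with count_mono[of \<omega> "Suc i" j] that show False
      by simp
  qed
  have "disjoint_family D"
    unfolding disjoint_family_on_def by (metis disjoint Int_commute linorder_neqE_nat)
  then show ?thesis
    unfolding D_def .
qed

lemma prob_disc_hole_crossing_le:
  assumes "0 < s" "s \<le> 1" "h > 0"
  shows "prob (count_in (mean_ball lam (s * (real m * h))) {0}
      \<inter> count_in (mean_ball lam (real m * h)) {..n} \<inter> count_in (mean_ball lam (real (Suc m) * h)) {Suc n..})
    \<le> (1 - s) ^ n * prob (count_in (mean_ball lam (real m * h)) {..n}
      \<inter> count_in (mean_ball lam (real (Suc m) * h)) {Suc n..})
      + exp (- (s * h)) ^ m * (1 - exp (- h) - h * exp (- h))"
proof -
  define A where "A = mean_ball lam (real m * h)"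
  define A' where "A' = mean_ball lam (real (Suc m) * h)"
  define H where "H = mean_ball lam (s * (real m * h))"
  have "s * (real m * h) \<le> real m * h" "real m * h \<le> real (Suc m) * h"
    using assms by (simp_all add: mult_left_le_one_le)
  then have sub: "H \<subseteq> A" "A \<subseteq> A'"
    unfolding A_def A'_def H_def using lam_pos by (simp_all add: mean_ball_mono)
  have vol_hole: "lam * measure lborel H = s * (lam * measure lborel A)"
    unfolding A_def H_def using lam_pos assms by (simp add: measure_mean_ball)
  have vol_shell: "lam * measure lborel (A' - A) = h"
    unfolding A_def A'_def using lam_pos assms by (simp add: measure_mean_ball_diff algebra_simps)
  have exp_hole: "exp (- (lam * measure lborel H)) = exp (- (s * h)) ^ m"
    unfolding H_def using lam_pos assms
    by (simp add: measure_mean_ball exp_of_nat_mult[symmetric] algebra_simps)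
  have shell: "A' - A \<in> sets borel" "bounded (A' - A)"
    unfolding A_def A'_def using mean_ball_borel_bounded by (auto intro: bounded_subset)
  have "prob (count_in (A' - A) {2..}) = 1 - exp (- h) - h * exp (- h)"
    using prob_count_ge_2[OF shell] unfolding vol_shell .
  moreover have "prob (count_in H {0} \<inter> count_in A {..n} \<inter> count_in A' {Suc n..})
      \<le> (1 - s) ^ n * prob (count_in A {..n} \<inter> count_in A' {Suc n..})
        + exp (- (lam * measure lborel H)) * prob (count_in (A' - A) {2..})"
    unfolding A_def A'_def H_def using sub vol_hole assms
    by (intro prob_hole_crossing_le) (simp_all add: A_def A'_def H_def mean_ball_borel_bounded)
  ultimately show ?thesis
    unfolding A_def A'_def H_def exp_hole[unfolded H_def] by simp
qed

text \<open>Discretise the area \<open>lam * pi * norm (x L \<omega>) ^ 2\<close> in steps of size \<open>h\<close>: on the event, some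
  step \<open>m\<close> has the disc count crossing from \<open>\<le> L - 1\<close> to \<open>\<ge> L\<close> while the inner hole of area
  \<open>s * m * h\<close> is empty; these crossing events are disjoint in \<open>m\<close>.\<close>

lemma prob_ratio_le_approx:
  fixes x :: "nat \<Rightarrow> 'w \<Rightarrow> real^2"
  assumes ae: "AE \<omega> in M. ordered_labelling (Phi \<omega>) (\<lambda>k. x k \<omega>)"
    and "L \<ge> 1" "0 < s" "s \<le> 1" "h > 0"
  shows "prob {\<omega>\<in>space M. s * norm (x L \<omega>) ^ 2 \<le> norm (x 1 \<omega>) ^ 2}
    \<le> (1 - s) ^ (L - 1) + (1 - exp (- h) - h * exp (- h)) / (1 - exp (- (s * h)))"
proof -
  define n where "n = L - 1"
  define A where "A m = mean_ball lam (real m * h)" for m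
  define D where "D m = count_in (A m) {..n} \<inter> count_in (A (Suc m)) {Suc n..}" for m
  define G where "G m = count_in (mean_ball lam (s * (real m * h))) {0} \<inter> D m" for m
  have events: "G m \<in> events" "D m \<in> events" for m
    unfolding G_def D_def A_def by (intro sets.Int count_in_event; simp add: mean_ball_borel_bounded)+
  have "A m \<subseteq> A (Suc m)" for m
    unfolding A_def using lam_pos \<open>h > 0\<close> by (intro mean_ball_mono) auto
  then have "disjoint_family D"
    unfolding D_def A_def by (intro disjoint_family_count_crossings) (auto simp: mean_ball_borel_bounded)
  moreover have "prob (G m) \<le> (1 - s) ^ n * prob (D m) + exp (- (s * h)) ^ m * (1 - exp (- h) - h * exp (- h))" for m
    unfolding G_def D_def A_def Int_assoc[symmetric] using assms by (intro prob_disc_hole_crossing_le) auto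
  ultimately have "prob (\<Union>m. G m) \<le> (1 - s) ^ n + (1 - exp (- h) - h * exp (- h)) / (1 - exp (- (s * h)))"
    using events \<open>0 < s\<close> \<open>s \<le> 1\<close> \<open>h > 0\<close>
    by (intro prob_UN_le_disjoint_plus_geometric[where D = D]) (auto simp: power_le_one)
  moreover have "prob {\<omega>\<in>space M. s * norm (x L \<omega>) ^ 2 \<le> norm (x 1 \<omega>) ^ 2} \<le> prob (\<Union>m. G m)"
  proof (rule finite_measure_mono_AE)
    show "AE \<omega> in M. \<omega> \<in> {\<omega>\<in>space M. s * norm (x L \<omega>) ^ 2 \<le> norm (x 1 \<omega>) ^ 2} \<longrightarrow> \<omega> \<in> (\<Union>m. G m)"
      using ae
    proof eventually_elim
      case (elim \<omega>)
      show ?case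
      proof
        assume "\<omega> \<in> {\<omega>\<in>space M. s * norm (x L \<omega>) ^ 2 \<le> norm (x 1 \<omega>) ^ 2}"
        then show "\<omega> \<in> (\<Union>m. G m)"
          using ordered_labelling_crossing[OF elim \<open>L \<ge> 1\<close> _ lam_pos \<open>h > 0\<close>, of s] \<open>s > 0\<close> \<open>L \<ge> 1\<close>
            finite_Phi_Int mean_ball_borel_bounded
          unfolding G_def D_def A_def n_def by auto
      qed
    qed
    show "(\<Union>m. G m) \<in> events"
      using events by auto
  qed
  ultimately show ?thesis
    unfolding n_def by linarith
qed

lemma prob_ratio_le:
  fixes x :: "nat \<Rightarrow> 'w \<Rightarrow> real^2"
  assumes "AE \<omega> in M. ordered_labelling (Phi \<omega>) (\<lambda>k. x k \<omega>)" and "L \<ge> 1" "0 < s" "s \<le> 1"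
  shows "prob {\<omega>\<in>space M. s * norm (x L \<omega>) ^ 2 \<le> norm (x 1 \<omega>) ^ 2} \<le> (1 - s) ^ (L - 1)"
proof -
  have "((\<lambda>h. (1 - exp (- h) - h * exp (- h)) / (1 - exp (- (s * h)))) \<longlongrightarrow> 0) (at_right 0)"
    using \<open>0 < s\<close> by real_asymp
  then have "((\<lambda>h. (1 - s) ^ (L - 1) + (1 - exp (- h) - h * exp (- h)) / (1 - exp (- (s * h))))
      \<longlongrightarrow> (1 - s) ^ (L - 1) + 0) (at_right 0)"
    by (intro tendsto_add tendsto_const)
  moreover have "eventually (\<lambda>h. prob {\<omega>\<in>space M. s * norm (x L \<omega>) ^ 2 \<le> norm (x 1 \<omega>) ^ 2}
      \<le> (1 - s) ^ (L - 1) + (1 - exp (- h) - h * exp (- h)) / (1 - exp (- (s * h)))) (at_right 0)"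
    using eventually_at_right_less[of "0::real"]
    by eventually_elim (rule prob_ratio_le_approx[OF assms], simp)
  ultimately show ?thesis
    using tendsto_le[OF trivial_limit_at_right_real _ tendsto_const] by fastforce
qed

lemma AE_counts_ball_less:
  assumes "b > 2"
  shows "AE \<omega> in M. \<exists>K. \<forall>k\<ge>K. real (pcount (Phi \<omega>) (ball 0 (2 ^ k))) < (2 powr b) ^ k"
proof -
  define c where "c = 2 powr b"
  have "c > 4"
    unfolding c_def using powr_less_mono[of 2 b 2] \<open>b > 2\<close> by simp
  define A where "A k = count_in (ball 0 (2 ^ k)) {nat \<lceil>c ^ k\<rceil>..}" for k :: nat
  have events: "A k \<in> events" for k
    unfolding A_def by (rule count_in_event) auto
  have prob_A: "prob (A k) \<le> lam * pi * (4 / c) ^ k" for k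
  proof -
    have "c ^ k > 0"
      using \<open>c > 4\<close> by simp
    then have "prob (A k) \<le> lam * measure lborel (ball (0::real^2) (2 ^ k)) / real (nat \<lceil>c ^ k\<rceil>)"
      unfolding A_def by (intro prob_count_ge_le) auto
    also have "\<dots> = lam * pi * 4 ^ k / real (nat \<lceil>c ^ k\<rceil>)"
      using circle_area[of "2 ^ k" "0::real^2"] by (simp add: power_mult_distrib[symmetric] power2_eq_square mult.assoc)
    also have "\<dots> \<le> lam * pi * 4 ^ k / c ^ k"
      using \<open>c ^ k > 0\<close> lam_pos by (intro divide_left_mono) (auto simp: real_nat_ceiling_ge)
    finally show ?thesis
      by (simp add: power_divide)
  qed
  have "summable (\<lambda>k. lam * pi * (4 / c) ^ k)"
    using \<open>c > 4\<close> by (intro summable_mult summable_geometric) auto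
  then have "summable (\<lambda>k. measure M (A k))"
    by (rule summable_comparison_test'[where N = 0]) (use prob_A in simp)
  then have "AE \<omega> in M. eventually (\<lambda>k. \<omega> \<in> space M - A k) sequentially"
    using events by (intro borel_cantelli_AE1) (auto simp: emeasure_eq_measure)
  then show ?thesis
  proof eventually_elim
    case (elim \<omega>)
    then obtain K where "\<And>k. k \<ge> K \<Longrightarrow> \<omega> \<in> space M - A k"
      unfolding eventually_sequentially by auto
    then have "real (pcount (Phi \<omega>) (ball 0 (2 ^ k))) < (2 powr b) ^ k" if "k \<ge> K" for k
      using that unfolding A_def c_def by force
    then show ?case
      by blast
  qed
qed

lemma AE_summable_norm_powr:
  fixes x :: "nat \<Rightarrow> 'w \<Rightarrow> real^2"
  assumes "\<alpha> > 2" and "AE \<omega> in M. ordered_labelling (Phi \<omega>) (\<lambda>k. x k \<omega>)"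
  shows "AE \<omega> in M. summable (\<lambda>j. norm (x j \<omega>) powr (- \<alpha>))"
proof -
  define b where "b = (\<alpha> + 2) / 2"
  have "b > 2" "\<alpha> > b"
    unfolding b_def using \<open>\<alpha> > 2\<close> by auto
  show ?thesis
    using assms(2) AE_counts_ball_less[OF \<open>b > 2\<close>] AE_space
  proof eventually_elim
    case (elim \<omega>)
    then obtain K where "\<And>k. k \<ge> K \<Longrightarrow> real (pcount (Phi \<omega>) (ball 0 (2 ^ k))) < (2 powr b) ^ k"
      by auto
    then show ?case
      using \<open>b > 2\<close> \<open>\<alpha> > b\<close> finite_Phi_Int[OF \<open>\<omega> \<in> space M\<close>]
      by (intro summable_norm_powr_of_counts[OF elim(1), of b]) (auto simp: pcount_def)
  qed
qed

lemma AE_zero_notin: "AE \<omega> in M. 0 \<notin> Phi \<omega>"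
proof -
  have "prob (count_in {0} {0}) = 1"
    using prob_count_eq[of "{0}" 0] by (simp add: pois_def)
  then have "AE \<omega> in M. \<omega> \<in> count_in {0} {0}"
    by (rule AE_prob_1)
  then show ?thesis
  proof eventually_elim
    case (elim \<omega>)
    then show ?case
      using finite_Phi_Int[of \<omega> "{0}"] by (auto simp: pcount_def)
  qed
qed

lemma PL_le_prob_norm_ratio:
  fixes x :: "nat \<Rightarrow> 'w \<Rightarrow> real^2" and a b :: "nat \<Rightarrow> 'w \<Rightarrow> bool"
  assumes [measurable]: "\<And>k. x k \<in> borel_measurable M"
    and ae: "AE \<omega> in M. ordered_labelling (Phi \<omega>) (\<lambda>k. x k \<omega>)"
    and "L \<ge> 2" "\<alpha> > 2" "P > 0" "\<sigma>2 \<ge> 0" "\<beta> > 0" "\<gamma> > 0"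
    and a: "\<And>i. i \<in> {1..L} \<Longrightarrow> {\<omega>\<in>space M. a i \<omega>} \<in> events \<and> prob {\<omega>\<in>space M. a i \<omega>} = 1"
  shows "PL M x a b P \<alpha> \<sigma>2 \<gamma> \<beta> L \<le> prob {\<omega>\<in>space M. \<gamma> / \<beta> - (real L - 2) > 0 \<and>
    (\<gamma> / \<beta> - (real L - 2)) powr (- 2 / \<alpha>) * norm (x L \<omega>) ^ 2 \<le> norm (x 1 \<omega>) ^ 2}"
    (is "_ \<le> prob ?E")
proof -
  have "?E \<in> events"
    by measurable
  have "AE \<omega> in M. a i \<omega>" if "i \<in> {1..L}" for i
  proof -
    have "AE \<omega> in M. \<omega> \<in> {\<omega>\<in>space M. a i \<omega>}"
      using a[OF that] by (intro AE_prob_1) simp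
    then show ?thesis
      by auto
  qed
  then have "AE \<omega> in M. \<forall>i\<in>{1..L}. a i \<omega>"
    by (subst AE_ball_countable) auto
  define f where "f \<omega> = (\<Prod>k\<in>{1..L}.
      of_bool (sinr P \<alpha> \<sigma>2 L (\<lambda>i. x i \<omega>) (\<lambda>i. a i \<omega>) (\<lambda>j. b j \<omega>) k \<ge> \<beta> / \<gamma>) :: real)" for \<omega>
  have bound: "AE \<omega> in M. f \<omega> \<le> indicator ?E \<omega>"
    using ae AE_zero_notin \<open>AE \<omega> in M. \<forall>i\<in>{1..L}. a i \<omega>\<close>
      AE_summable_norm_powr[OF \<open>\<alpha> > 2\<close> ae] AE_space
  proof eventually_elim
    case (elim \<omega>)
    show ?case
    proof (cases "sinr P \<alpha> \<sigma>2 L (\<lambda>i. x i \<omega>) (\<lambda>i. a i \<omega>) (\<lambda>j. b j \<omega>) L \<ge> \<beta> / \<gamma>")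
      case True
      have "norm (x i \<omega>) > 0" if "i \<ge> 1" for i
        using elim(1,2) that unfolding ordered_labelling_def by auto
      then have "\<omega> \<in> ?E"
        using sinr_threshold_imp_norm_ratio[of "norm (x 1 \<omega>)" "norm (x L \<omega>)" \<alpha> \<beta> \<gamma> "real L - 2"]
          sinr_last_le[OF elim(1,2) \<open>L \<ge> 2\<close> elim(3,4), of P \<sigma>2 "\<lambda>j. b j \<omega>"] True elim(5) assms(3-8)
        by auto
      moreover have "f \<omega> \<le> 1"
        unfolding f_def by (intro prod_le_1) auto
      ultimately show ?thesis
        by simp
    next
      case False
      then have "f \<omega> = 0"
        unfolding f_def using \<open>L \<ge> 2\<close> by (intro prod_zero bexI[of _ L]) auto
      then show ?thesis
        by simp
    qed
  qed
  then show ?thesis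
    unfolding PL_def f_def using \<open>?E \<in> events\<close> by (rule integral_le_prob_of_AE_le_indicator)
qed

end

theorem corollary2:
  fixes M :: "'w measure" and Phi :: "'w \<Rightarrow> (real^2) set" and lam :: real
    and x :: "nat \<Rightarrow> 'w \<Rightarrow> real^2" and a b :: "nat \<Rightarrow> 'w \<Rightarrow> bool"
    and L :: nat and \<alpha> P \<sigma>2 \<gamma> \<beta> p q Pstar :: real
  assumes "prob_space M"
    and "lam > 0"
    and "PPP M Phi lam"
    and "\<And>k. x k \<in> borel_measurable M"
    and "AE \<omega> in M. ordered_labelling (Phi \<omega>) (\<lambda>k. x k \<omega>)"
    and "L \<ge> 2" and "\<alpha> > 2" and "P > 0" and "\<sigma>2 \<ge> 0" and "\<gamma> > 0" and "\<beta> > 0"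
    and "p = 1" and "0 \<le> q" and "q \<le> 1"
    and "\<And>i. i \<in> {1..L} \<Longrightarrow> {\<omega>\<in>space M. a i \<omega>} \<in> sets M \<and> measure M {\<omega>\<in>space M. a i \<omega>} = p"
    and "\<And>j. j > L \<Longrightarrow> {\<omega>\<in>space M. b j \<omega>} \<in> sets M \<and> measure M {\<omega>\<in>space M. b j \<omega>} = q"
    and "prob_space.indep_sets M
           (\<lambda>t. case t of
                  None \<Rightarrow> phi_sigma M Phi
                | Some (Inl i) \<Rightarrow> sigma_sets (space M) {{\<omega>\<in>space M. a i \<omega>}}
                | Some (Inr j) \<Rightarrow> sigma_sets (space M) {{\<omega>\<in>space M. b j \<omega>}})
           (insert None (Some ` (Inl ` {1..L} \<union> Inr ` {L<..})))"
    and "0 < Pstar" and "Pstar < 1"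
    and "PL M x a b P \<alpha> \<sigma>2 \<gamma> \<beta> L \<ge> Pstar"
  shows "\<gamma> \<ge> \<beta> * ((1 - Pstar powr (1 / (real L - 1))) powr (- \<alpha> / 2) + real L - 2)"
proof -
  interpret ppp M Phi lam
    using assms(1-3) by (intro ppp.intro ppp_axioms.intro)
  define c where "c = \<gamma> / \<beta> - (real L - 2)"
  define E where "E = {\<omega>\<in>space M. c > 0 \<and> c powr (- 2 / \<alpha>) * norm (x L \<omega>) ^ 2 \<le> norm (x 1 \<omega>) ^ 2}"
  \<comment> \<open>Only the nonnegativity of the interference from \<open>x j\<close>, \<open>j > L\<close>, enters.\<close>
  have "PL M x a b P \<alpha> \<sigma>2 \<gamma> \<beta> L \<le> prob E"
    unfolding c_def E_def using assms(4,5,15) \<open>p = 1\<close> \<open>L \<ge> 2\<close> \<open>\<alpha> > 2\<close> \<open>P > 0\<close> \<open>\<sigma>2 \<ge> 0\<close> \<open>\<beta> > 0\<close> \<open>\<gamma> > 0\<close>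
    by (intro PL_le_prob_norm_ratio) auto
  then have "Pstar \<le> prob E"
    using \<open>Pstar \<le> PL M x a b P \<alpha> \<sigma>2 \<gamma> \<beta> L\<close> by linarith
  then have "c > 0"
    using \<open>0 < Pstar\<close> unfolding E_def by (cases "c > 0") auto
  define s where "s = min (c powr (- 2 / \<alpha>)) 1"
  have "0 < s" "s \<le> 1"
    using \<open>c > 0\<close> unfolding s_def by auto
  have [measurable]: "x k \<in> borel_measurable M" for k
    using assms(4) .
  have "s * norm (x L \<omega>) ^ 2 \<le> c powr (- 2 / \<alpha>) * norm (x L \<omega>) ^ 2" for \<omega>
    unfolding s_def by (intro mult_right_mono) auto
  then have "prob E \<le> prob {\<omega>\<in>space M. s * norm (x L \<omega>) ^ 2 \<le> norm (x 1 \<omega>) ^ 2}"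
    unfolding E_def by (intro finite_measure_mono) (auto intro: order_trans)
  also have "\<dots> \<le> (1 - s) ^ (L - 1)"
    using \<open>0 < s\<close> \<open>s \<le> 1\<close> \<open>L \<ge> 2\<close> assms(5) by (intro prob_ratio_le) auto
  finally have "s \<le> 1 - Pstar powr (1 / real (L - 1))"
    using \<open>Pstar \<le> prob E\<close> \<open>0 < Pstar\<close> \<open>s \<le> 1\<close> \<open>L \<ge> 2\<close> by (intro le_one_minus_powr_of_le_power) auto
  moreover have "Pstar powr (1 / real (L - 1)) > 0"
    using \<open>0 < Pstar\<close> by simp
  ultimately have "c powr (- 2 / \<alpha>) \<le> 1 - Pstar powr (1 / (real L - 1))"
    unfolding s_def using \<open>L \<ge> 2\<close> by (auto simp: of_nat_diff min_def split: if_splits)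
  then have "(1 - Pstar powr (1 / (real L - 1))) powr (- \<alpha> / 2) \<le> c"
    using \<open>c > 0\<close> \<open>\<alpha> > 2\<close> by (intro powr_antitone_inverse_le) auto
  then show ?thesis
    using \<open>\<beta> > 0\<close> unfolding c_def by (simp add: field_simps)
qed

end
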